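(* Let $T\in\mathcal{T}_\pi$ and let $u_1v_1,u_2v_2\in E(T)$ be edges such that the path $P_{v_1v_2}$ contains neither $u_1$ nor $u_2$. Let $T'$ be obtained from $T$ by replacing the edges $u_1v_1$ and $u_2v_2$ by the edges $u_1v_2$ and $u_2v_1$. Then $T'$ is a tree and $T'\in\mathcal{T}_\pi$. Furthermore, for every eigenvector $f$ of $L(T)$ corresponding to $\lambda(T)$: if $|f(u_1)|\ge|f(u_2)|$ and $|f(v_2)|\ge|f(v_1)|$, then $\lambda(T')\ge\lambda(T)$, and the inequality is strict if at least one of $|f(u_1)|\ge|f(u_2)|$, $|f(v_2)|\ge|f(v_1)|$ is strict.
   Context: For a graph $G=(V,E)$ the Laplacian is $L(G)=D(G)-A(G)$ ($D$ the diagonal degree matrix, $A$ the adjacency matrix), and $\lambda(G)$ denotes its largest eigenvalue. $\mathcal{T}_\pi$ is the set of all trees with degree sequence $\pi$. $P_{uv}$ denotes the (unique) path in the tree between vertices $u$ and $v$. *)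

theory Defs
  imports Complex_Main "HOL-Library.Multiset"
begin

definition simple_graph :: "'a set \<Rightarrow> 'a set set \<Rightarrow> bool" where
  "simple_graph V E \<longleftrightarrow> finite V \<and>
     (\<forall>e\<in>E. \<exists>u v. e = {u, v} \<and> u \<noteq> v \<and> u \<in> V \<and> v \<in> V)"

fun is_walk :: "'a set set \<Rightarrow> 'a list \<Rightarrow> bool" where
  "is_walk E [] = False"
| "is_walk E [v] = True"
| "is_walk E (u # v # vs) = ({u, v} \<in> E \<and> is_walk E (v # vs))"

definition is_path :: "'a set set \<Rightarrow> 'a list \<Rightarrow> bool" where
  "is_path E p \<longleftrightarrow> is_walk E p \<and> distinct p"

definition connected_graph :: "'a set \<Rightarrow> 'a set set \<Rightarrow> bool" where
  "connected_graph V E \<longleftrightarrow>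
     (\<forall>u\<in>V. \<forall>v\<in>V. \<exists>p. is_walk E p \<and> set p \<subseteq> V \<and> hd p = u \<and> last p = v)"

text \<open>A cycle: a path v0 ... vk with k >= 2 together with the closing edge vk v0.\<close>
definition acyclic_graph :: "'a set \<Rightarrow> 'a set set \<Rightarrow> bool" where
  "acyclic_graph V E \<longleftrightarrow>
     \<not> (\<exists>p. is_path E p \<and> set p \<subseteq> V \<and> length p \<ge> 3 \<and> {last p, hd p} \<in> E)"

definition is_tree :: "'a set \<Rightarrow> 'a set set \<Rightarrow> bool" where
  "is_tree V E \<longleftrightarrow> simple_graph V E \<and> V \<noteq> {} \<and> connected_graph V E \<and> acyclic_graph V E"

definition tree_path :: "'a set \<Rightarrow> 'a set set \<Rightarrow> 'a \<Rightarrow> 'a \<Rightarrow> 'a list" where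
  "tree_path V E u v = (THE p. is_path E p \<and> set p \<subseteq> V \<and> hd p = u \<and> last p = v)"

definition degree :: "'a set set \<Rightarrow> 'a \<Rightarrow> nat" where
  "degree E v = card {e \<in> E. v \<in> e}"

definition degree_seq :: "'a set \<Rightarrow> 'a set set \<Rightarrow> nat multiset" where
  "degree_seq V E = image_mset (degree E) (mset_set V)"

definition laplacian :: "'a set \<Rightarrow> 'a set set \<Rightarrow> ('a \<Rightarrow> real) \<Rightarrow> 'a \<Rightarrow> real" where
  "laplacian V E f v = real (degree E v) * f v - (\<Sum>w\<in>{w \<in> V. {v, w} \<in> E}. f w)"

definition lap_eigenvector :: "'a set \<Rightarrow> 'a set set \<Rightarrow> real \<Rightarrow> ('a \<Rightarrow> real) \<Rightarrow> bool" where
  "lap_eigenvector V E \<mu> f \<longleftrightarrow>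
     (\<exists>v\<in>V. f v \<noteq> 0) \<and> (\<forall>v\<in>V. laplacian V E f v = \<mu> * f v)"

definition lap_eigenvalue :: "'a set \<Rightarrow> 'a set set \<Rightarrow> real \<Rightarrow> bool" where
  "lap_eigenvalue V E \<mu> \<longleftrightarrow> (\<exists>f. lap_eigenvector V E \<mu> f)"

definition lap_max_eig :: "'a set \<Rightarrow> 'a set set \<Rightarrow> real" where
  "lap_max_eig V E = Max {\<mu>. lap_eigenvalue V E \<mu>}"

end

theory Submission
  imports Defs "HOL-Analysis.Analysis"
begin

(* Deleting both edges leaves a forest E0 with three components: those of u1, of u2, and
   the one containing P.  The switched graph T' adds u1v2 and u2v1, i.e. it joins the first
   two components to the third one, so it is again a tree, and every vertex keeps its degree.

   For the spectral part let f be an eigenvector for lambda(T).  Flipping the sign of f on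
   the components of u1 and u2 where necessary gives a vector x with the same norm such that
   <x, L(T') x> - <f, L(T) f> is bounded below by 2 (|f u1| - |f u2|) (|f v2| - |f v1|) >= 0;
   the Rayleigh principle then yields lambda(T') >= lambda(T).  If equality held, x would be
   an eigenvector of L(T'), and comparing eigen-equations at u1 and v1 forces
   |f v2| = |f v1| and |f u2| = |f u1|. *)

definition adj :: "'a set set \<Rightarrow> 'a \<Rightarrow> 'a \<Rightarrow> bool" where
  "adj E x y \<longleftrightarrow> {x, y} \<in> E"

abbreviation reach :: "'a set set \<Rightarrow> 'a \<Rightarrow> 'a \<Rightarrow> bool" where
  "reach E \<equiv> (adj E)\<^sup>*\<^sup>*"

lemma reach_edge: "{x, y} \<in> E \<Longrightarrow> reach E x y"
  by (simp add: adj_def r_into_rtranclp)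

lemma reach_sym: "reach E x y \<Longrightarrow> reach E y x"
proof (induction rule: rtranclp_induct)
  case (step y z)
  then have "adj E z y" by (simp add: adj_def insert_commute)
  then show ?case using step(3) by (meson converse_rtranclp_into_rtranclp)
qed simp

lemma reach_via:
  assumes "\<And>a b. {a, b} \<in> E1 \<Longrightarrow> reach E2 a b" and "reach E1 x y"
  shows "reach E2 x y"
  using assms(2)
proof (induction rule: rtranclp_induct)
  case (step y z)
  then show ?case using assms(1) by (meson adj_def rtranclp_trans)
qed simp

lemma reach_mono: "E1 \<subseteq> E2 \<Longrightarrow> reach E1 x y \<Longrightarrow> reach E2 x y"
  by (rule reach_via[of E1]) (auto intro: reach_edge)

lemma reach_add_edge:
  assumes "reach (G \<union> {{c, d}}) x y"
  shows "reach G x y \<or> (reach G x c \<and> reach G d y) \<or> (reach G x d \<and> reach G c y)"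
  using assms
proof (induction rule: rtranclp_induct)
  case (step y z)
  have "{y, z} \<in> G \<or> {y, z} = {c, d}" using step(2) by (auto simp: adj_def)
  then show ?case
  proof
    assume "{y, z} \<in> G"
    then show ?thesis using step(3) reach_edge[of y z G] by (meson rtranclp_trans)
  next
    assume "{y, z} = {c, d}"
    then have "(y = c \<and> z = d) \<or> (y = d \<and> z = c)" by (auto simp: doubleton_eq_iff)
    then show ?thesis using step(3) by (metis reach_sym rtranclp.rtrancl_refl)
  qed
qed simp

lemma walk_Cons_tl: "is_walk E (x # l) \<Longrightarrow> l \<noteq> [] \<Longrightarrow> is_walk E l"
  by (cases l) auto

lemma walk_suffix: "is_walk E (xs @ ys) \<Longrightarrow> ys \<noteq> [] \<Longrightarrow> is_walk E ys"
  by (induction xs) (auto dest: walk_Cons_tl)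

lemma walk_snoc: "is_walk E p \<Longrightarrow> {last p, c} \<in> E \<Longrightarrow> is_walk E (p @ [c])"
  by (induction E p rule: is_walk.induct) auto

lemma walk_mono: "is_walk E1 p \<Longrightarrow> E1 \<subseteq> E2 \<Longrightarrow> is_walk E2 p"
  by (induction E1 p rule: is_walk.induct) auto

lemma walk_avoid: "is_walk E p \<Longrightarrow> a \<notin> set p \<Longrightarrow> a \<in> e \<Longrightarrow> is_walk (E - {e}) p"
  by (induction E p rule: is_walk.induct) auto

lemma walk_nonempty: "is_walk E p \<Longrightarrow> p \<noteq> []"
  by (cases p) auto

lemma walk_reach: "is_walk E p \<Longrightarrow> reach E (hd p) (last p)"
proof (induction E p rule: is_walk.induct)
  case (3 E u v vs)
  have "adj E u v" using 3 by (simp add: adj_def)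
  moreover have "reach E v (last (v # vs))" using 3 by simp
  ultimately show ?case by (simp add: converse_rtranclp_into_rtranclp)
qed auto

lemma reach_walk: "reach E a b \<Longrightarrow> \<exists>p. is_walk E p \<and> hd p = a \<and> last p = b"
proof (induction rule: rtranclp_induct)
  case base then show ?case by (intro exI[of _ "[a]"]) auto
next
  case (step y z)
  then obtain p where p: "is_walk E p" "hd p = a" "last p = y" by blast
  then show ?case using step(2) walk_snoc[of E p z] walk_nonempty[of E p]
    by (intro exI[of _ "p @ [z]"]) (auto simp: adj_def)
qed

lemma simple_edge: "simple_graph V E \<Longrightarrow> {a, b} \<in> E \<Longrightarrow> a \<noteq> b \<and> a \<in> V \<and> b \<in> V"
  unfolding simple_graph_def by (auto simp: doubleton_eq_iff)

lemma simple_finite: "simple_graph V E \<Longrightarrow> finite E"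
  unfolding simple_graph_def by (metis Pow_iff finite_Pow_iff finite_subset subsetI insert_subset
      empty_subsetI)

lemma walk_set: "simple_graph V E \<Longrightarrow> is_walk E p \<Longrightarrow> hd p \<in> V \<Longrightarrow> set p \<subseteq> V"
proof (induction E p rule: is_walk.induct)
  case (3 E u v vs)
  then show ?case using simple_edge[of V E u v] by auto
qed auto

text \<open>Every walk contains a path with the same end vertices (shortcut at repeated vertices).\<close>
lemma walk_to_path:
  "is_walk E p \<Longrightarrow> \<exists>q. is_path E q \<and> hd q = hd p \<and> last q = last p \<and> set q \<subseteq> set p"
proof (induction E p rule: is_walk.induct)
  case (2 E v)
  then show ?case by (intro exI[of _ "[v]"]) (auto simp: is_path_def)
next
  case (3 E u v vs)
  then obtain q where q: "is_path E q" "hd q = v" "last q = last (v # vs)" "set q \<subseteq> set (v # vs)"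
    by auto
  have qne: "q \<noteq> []" using q(1) walk_nonempty unfolding is_path_def by blast
  show ?case
  proof (cases "u \<in> set q")
    case True
    then obtain ys zs where qs: "q = ys @ u # zs" by (meson split_list)
    then have "is_walk E (u # zs)" "distinct (u # zs)"
      using q(1) walk_suffix[of E ys "u # zs"] by (auto simp: is_path_def)
    then show ?thesis using q qs by (intro exI[of _ "u # zs"]) (auto simp: is_path_def)
  next
    case False
    obtain q' where q': "q = v # q'" using qne q(2) by (cases q) auto
    have "is_walk E (u # q)" "distinct (u # q)"
      using 3(2) q(1) q' False by (auto simp: is_path_def)
    then show ?thesis using q qne by (intro exI[of _ "u # q"]) (auto simp: is_path_def)
  qed
qed auto

lemma connected_graph_iff_reach:
  assumes "simple_graph V E"
  shows "connected_graph V E \<longleftrightarrow> (\<forall>a\<in>V. \<forall>b\<in>V. reach E a b)"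
  unfolding connected_graph_def
  using walk_reach reach_walk walk_set[OF assms] by metis

lemma bridge_of_acyclic:
  assumes sg: "simple_graph V E" and ac: "acyclic_graph V E" and e: "{a, b} \<in> E"
  shows "\<not> reach (E - {{a, b}}) a b"
proof
  assume "reach (E - {{a, b}}) a b"
  then obtain p where "is_walk (E - {{a, b}}) p" "hd p = a" "last p = b" using reach_walk by metis
  then obtain q where q: "is_path (E - {{a, b}}) q" "hd q = a" "last q = b"
    using walk_to_path by metis
  have ab: "a \<noteq> b" "a \<in> V" using simple_edge[OF sg e] by auto
  have qw: "is_walk (E - {{a, b}}) q" using q(1) by (simp add: is_path_def)
  obtain q1 where q1: "q = a # q1" using q(2) walk_nonempty[OF qw] by (cases q) auto
  have "q1 \<noteq> []" using q1 q(3) ab by auto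
  then obtain c q2 where q2: "q1 = c # q2" by (cases q1) auto
  have "q2 \<noteq> []"
  proof
    assume "q2 = []"
    then have "q = [a, b]" using q1 q2 q(3) by simp
    then show False using qw by simp
  qed
  then have len: "length q \<ge> 3" using q1 q2 by (cases q2) auto
  have "is_path E q" using q(1) walk_mono[of "E - {{a,b}}" q E] by (auto simp: is_path_def)
  moreover have "set q \<subseteq> V" using walk_set[OF sg, of q] \<open>is_path E q\<close> q(2) ab
    by (auto simp: is_path_def)
  moreover have "{last q, hd q} \<in> E" using q(2,3) e by (simp add: insert_commute)
  ultimately show False using ac len unfolding acyclic_graph_def by blast
qed

lemma walk_minus_closing:
  assumes "is_walk E p" "distinct p" "length p \<ge> 3"
  shows "is_walk (E - {{last p, hd p}}) p"
proof -
  obtain a b r where pq: "p = a # b # r" using assms by (metis Suc_le_length_iff numeral_3_eq_3)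
  have rne: "r \<noteq> []" using assms pq by auto
  have "is_walk (E - {{last p, hd p}}) (b # r)"
    using walk_avoid[of E "b # r" a "{last p, hd p}"] assms pq by simp
  moreover have "{a, b} \<noteq> {last p, hd p}"
  proof
    assume "{a, b} = {last p, hd p}"
    then have "b = last r" using pq rne assms(2) by (auto simp: doubleton_eq_iff)
    then show False using pq rne assms(2) last_in_set[OF rne] by simp
  qed
  ultimately show ?thesis using assms(1) pq by simp
qed

lemma acyclic_of_bridges:
  assumes br: "\<And>a b. {a, b} \<in> E \<Longrightarrow> \<not> reach (E - {{a, b}}) a b"
  shows "acyclic_graph V E"
  unfolding acyclic_graph_def
proof
  assume "\<exists>p. is_path E p \<and> set p \<subseteq> V \<and> length p \<ge> 3 \<and> {last p, hd p} \<in> E"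
  then obtain p where p: "is_path E p" "length p \<ge> 3" "{last p, hd p} \<in> E" by blast
  have "is_walk (E - {{last p, hd p}}) p" using walk_minus_closing p by (auto simp: is_path_def)
  then have "reach (E - {{last p, hd p}}) (last p) (hd p)" by (rule reach_sym[OF walk_reach])
  then show False using br[OF p(3)] by simp
qed

lemma acyclic_mono:
  assumes "acyclic_graph V E" and "F \<subseteq> E"
  shows "acyclic_graph V F"
proof -
  have "is_path F p \<Longrightarrow> is_path E p" for p
    using walk_mono[of F p E] assms(2) by (simp add: is_path_def)
  then show ?thesis using assms unfolding acyclic_graph_def by blast
qed

lemma acyclic_add_edge:
  assumes sg: "simple_graph V G" and ac: "acyclic_graph V G" and sep: "\<not> reach G a b"
  shows "acyclic_graph V (G \<union> {{a, b}})"
proof (rule acyclic_of_bridges)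
  fix x y assume xy: "{x, y} \<in> G \<union> {{a, b}}"
  show "\<not> reach (G \<union> {{a, b}} - {{x, y}}) x y"
  proof (cases "{x, y} = {a, b}")
    case True
    then have ab: "(x = a \<and> y = b) \<or> (x = b \<and> y = a)" by (auto simp: doubleton_eq_iff)
    have sub: "G \<union> {{a, b}} - {{x, y}} \<subseteq> G" using True by blast
    show ?thesis
    proof
      assume "reach (G \<union> {{a, b}} - {{x, y}}) x y"
      then have "reach G x y" by (rule reach_mono[OF sub])
      then have "reach G a b \<or> reach G b a" using ab by blast
      then show False using sep reach_sym[of G b a] by blast
    qed
  next
    case False
    let ?H = "G - {{x, y}}"
    have xyG: "{x, y} \<in> G" using xy False by blast
    have eq: "G \<union> {{a, b}} - {{x, y}} = ?H \<union> {{a, b}}" using False by blast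
    have HG: "reach ?H s t \<Longrightarrow> reach G s t" for s t by (rule reach_mono[of ?H]) auto
    have xy_reach: "reach G x y" "reach G y x"
      using xyG by (simp_all add: reach_edge insert_commute)
    show ?thesis
    proof
      assume "reach (G \<union> {{a, b}} - {{x, y}}) x y"
      then have "reach (?H \<union> {{a, b}}) x y" by (simp only: eq)
      from reach_add_edge[OF this]
      consider "reach ?H x y" | "reach ?H x a" "reach ?H b y" | "reach ?H x b" "reach ?H a y"
        by blast
      then show False
      proof cases
        case 1 then show False using bridge_of_acyclic[OF sg ac xyG] by simp
      next
        case 2
        have "reach G a x" using reach_sym[OF HG[OF 2(1)]] .
        also have "reach G x y" by (rule xy_reach(1))
        also have "reach G y b" using reach_sym[OF HG[OF 2(2)]] .
        finally show False using sep by simp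
      next
        case 3
        have "reach G a y" using HG[OF 3(2)] .
        also have "reach G y x" by (rule xy_reach(2))
        also have "reach G x b" using HG[OF 3(1)] .
        finally show False using sep by simp
      qed
    qed
  qed
qed

lemma path_unique:
  assumes sg: "simple_graph V E" and ac: "acyclic_graph V E"
  shows "is_path E p \<Longrightarrow> is_path E q \<Longrightarrow> hd p = hd q \<Longrightarrow> last p = last q \<Longrightarrow> p = q"
proof (induction p arbitrary: q)
  case Nil then show ?case by (simp add: is_path_def)
next
  case (Cons a p')
  have qne: "q \<noteq> []" using Cons.prems(2) walk_nonempty by (auto simp: is_path_def)
  then obtain q' where q: "q = a # q'" using Cons.prems(3) by (cases q) auto
  show ?case
  proof (cases "p' = []")
    case True
    then have "last q = a" using Cons.prems(4) by simp
    then have "q' = []" using q Cons.prems(2) by (cases "q' = []") (auto simp: is_path_def)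
    then show ?thesis using q True by simp
  next
    case False
    have "last p' \<noteq> a" using False Cons.prems(1) by (auto simp: is_path_def)
    then have q'ne: "q' \<noteq> []" using Cons.prems(4) q False by auto
    have wp': "is_walk E p'" "distinct p'" "a \<notin> set p'"
      using Cons.prems(1) False walk_Cons_tl by (auto simp: is_path_def)
    have wq': "is_walk E q'" "distinct q'" "a \<notin> set q'"
      using Cons.prems(2) q q'ne walk_Cons_tl by (auto simp: is_path_def)
    have lst: "last p' = last q'" using Cons.prems(4) q False q'ne by simp
    show ?thesis
    proof (cases "hd p' = hd q'")
      case True
      then show ?thesis using Cons.IH[of q'] wp' wq' lst q by (auto simp: is_path_def)
    next
      case hne: False
      (* Two different first steps would close a cycle through the edge a x. *)
      define x where "x = hd p'"
      define y where "y = hd q'"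
      have ex: "{a, x} \<in> E" using Cons.prems(1) False unfolding x_def
        by (cases p') (auto simp: is_path_def)
      have ey: "{a, y} \<in> E" using Cons.prems(2) q q'ne unfolding y_def
        by (cases q') (auto simp: is_path_def)
      let ?F = "E - {{a, x}}"
      have "a \<noteq> y" using wq' q'ne unfolding y_def by (cases q') auto
      then have "{a, y} \<noteq> {a, x}" using hne unfolding x_def y_def by (auto simp: doubleton_eq_iff)
      then have r1: "reach ?F a y" using ey by (intro reach_edge) auto
      have r2: "reach ?F y (last q')"
        using walk_reach[OF walk_avoid[OF wq'(1) wq'(3)]] unfolding y_def by simp
      have r3: "reach ?F x (last p')"
        using walk_reach[OF walk_avoid[OF wp'(1) wp'(3)]] unfolding x_def by simp
      have "reach ?F a x" using r1 r2 lst reach_sym[OF r3] by (metis rtranclp_trans)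
      then show ?thesis using bridge_of_acyclic[OF sg ac ex] by simp
    qed
  qed
qed

lemma tree_path_props:
  assumes t: "is_tree V E" and a: "a \<in> V" and b: "b \<in> V"
  shows "is_path E (tree_path V E a b) \<and> hd (tree_path V E a b) = a \<and> last (tree_path V E a b) = b"
proof -
  have sg: "simple_graph V E" and ac: "acyclic_graph V E" and cn: "connected_graph V E"
    using t by (auto simp: is_tree_def)
  obtain p where p: "is_walk E p" "set p \<subseteq> V" "hd p = a" "last p = b"
    using cn a b unfolding connected_graph_def by blast
  obtain q where q: "is_path E q" "hd q = a" "last q = b" "set q \<subseteq> set p"
    using walk_to_path[OF p(1)] p by metis
  have "\<exists>!q. is_path E q \<and> set q \<subseteq> V \<and> hd q = a \<and> last q = b"
    using q p(2) path_unique[OF sg ac] by (intro ex1I[of _ q]) auto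
  then have "is_path E (tree_path V E a b) \<and> set (tree_path V E a b) \<subseteq> V \<and>
      hd (tree_path V E a b) = a \<and> last (tree_path V E a b) = b"
    unfolding tree_path_def by (rule theI')
  then show ?thesis by simp
qed

lemma simple_graph_subset: "simple_graph V E \<Longrightarrow> F \<subseteq> E \<Longrightarrow> simple_graph V F"
  unfolding simple_graph_def by blast

lemma card_edges_at:
  "A \<noteq> B \<Longrightarrow> card {e \<in> {A, B}. v \<in> e} = (if v \<in> A then 1 else 0) + (if v \<in> B then 1 else (0::nat))"
proof -
  assume ne: "A \<noteq> B"
  have "{e \<in> {A, B}. v \<in> e} = (if v \<in> A then {A} else {}) \<union> (if v \<in> B then {B} else {})" by auto
  then show ?thesis using ne by (auto simp: card_insert_if)
qed

definition nbrs :: "'a set \<Rightarrow> 'a set set \<Rightarrow> 'a \<Rightarrow> 'a set" where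
  "nbrs V E v = {w \<in> V. {v, w} \<in> E}"

definition vdot :: "'a set \<Rightarrow> ('a \<Rightarrow> real) \<Rightarrow> ('a \<Rightarrow> real) \<Rightarrow> real" where
  "vdot V x y = (\<Sum>v\<in>V. x v * y v)"

definition lap_form :: "'a set \<Rightarrow> 'a set set \<Rightarrow> ('a \<Rightarrow> real) \<Rightarrow> ('a \<Rightarrow> real) \<Rightarrow> real" where
  "lap_form V E x y = (\<Sum>v\<in>V. x v * laplacian V E y v)"

definition arc_form :: "'a set \<Rightarrow> 'a set set \<Rightarrow> ('a \<Rightarrow> real) \<Rightarrow> ('a \<Rightarrow> real) \<Rightarrow> real" where
  "arc_form V E x y =
     (\<Sum>p\<in>Sigma V (nbrs V E). (x (fst p) - x (snd p)) * (y (fst p) - y (snd p)))"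

lemma nbrs_finite: "finite V \<Longrightarrow> finite (nbrs V E v)"
  unfolding nbrs_def by simp

lemma degree_nbrs:
  assumes sg: "simple_graph V E"
  shows "Defs.degree E v = card (nbrs V E v)"
proof -
  have "bij_betw (\<lambda>w. {v, w}) (nbrs V E v) {e \<in> E. v \<in> e}"
  proof (rule bij_betwI')
    fix w w' assume "w \<in> nbrs V E v"
    then have "w \<noteq> v" using simple_edge[OF sg] unfolding nbrs_def by blast
    then show "({v, w} = {v, w'}) = (w = w')" by (auto simp: doubleton_eq_iff)
  next
    fix e assume e: "e \<in> {e \<in> E. v \<in> e}"
    then obtain a b where ab: "e = {a, b}" "a \<in> V" "b \<in> V" using sg unfolding simple_graph_def by blast
    then show "\<exists>w\<in>nbrs V E v. e = {v, w}"
      using e by (cases "v = a") (auto simp: nbrs_def insert_commute)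
  qed (auto simp: nbrs_def)
  then show ?thesis unfolding Defs.degree_def by (simp add: bij_betw_same_card)
qed

lemma laplacian_nbrs: "laplacian V E f v = real (Defs.degree E v) * f v - (\<Sum>w\<in>nbrs V E v. f w)"
  unfolding laplacian_def nbrs_def by simp

text \<open>Adjacency is symmetric, so sums over arcs are invariant under reversing the arcs.\<close>
lemma arc_sum_swap:
  fixes g :: "'a \<Rightarrow> 'a \<Rightarrow> real"
  shows "(\<Sum>p\<in>Sigma V (nbrs V E). g (snd p) (fst p)) = (\<Sum>p\<in>Sigma V (nbrs V E). g (fst p) (snd p))"
proof -
  have sw: "prod.swap ` Sigma V (nbrs V E) = Sigma V (nbrs V E)"
    by (auto simp: nbrs_def insert_commute image_iff)
  have "(\<Sum>p\<in>Sigma V (nbrs V E). g (fst p) (snd p))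
      = (\<Sum>p\<in>prod.swap ` Sigma V (nbrs V E). g (fst p) (snd p))"
    using sw by simp
  also have "\<dots> = (\<Sum>p\<in>Sigma V (nbrs V E). g (snd p) (fst p))"
    by (subst sum.reindex) auto
  finally show ?thesis by simp
qed

lemma arc_sum_nested:
  "finite V \<Longrightarrow> (\<Sum>p\<in>Sigma V (nbrs V E). g p) = (\<Sum>v\<in>V. \<Sum>w\<in>nbrs V E v. g (v, w))"
  by (subst sum.Sigma) (auto simp: nbrs_finite split_def)

lemma arc_form_eq_lap_form:
  assumes sg: "simple_graph V E"
  shows "arc_form V E x y = 2 * lap_form V E x y"
proof -
  let ?D = "Sigma V (nbrs V E)"
  have fV: "finite V" using sg by (simp add: simple_graph_def)
  have e1: "(\<Sum>p\<in>?D. x (fst p) * y (fst p)) = (\<Sum>v\<in>V. real (Defs.degree E v) * x v * y v)"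
    by (simp add: arc_sum_nested[OF fV] degree_nbrs[OF sg] mult.assoc)
  have e2: "(\<Sum>p\<in>?D. x (fst p) * y (snd p)) = (\<Sum>v\<in>V. x v * (\<Sum>w\<in>nbrs V E v. y w))"
    by (simp add: arc_sum_nested[OF fV] sum_distrib_left)
  have e3: "(\<Sum>p\<in>?D. x (snd p) * y (snd p)) = (\<Sum>p\<in>?D. x (fst p) * y (fst p))"
    using arc_sum_swap[of "\<lambda>a b. x b * y b"] by simp
  have e4: "(\<Sum>p\<in>?D. x (snd p) * y (fst p)) = (\<Sum>p\<in>?D. x (fst p) * y (snd p))"
    using arc_sum_swap[of "\<lambda>a b. x a * y b"] by simp
  have "arc_form V E x y = (\<Sum>p\<in>?D. x (fst p) * y (fst p)) - (\<Sum>p\<in>?D. x (fst p) * y (snd p))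
      - (\<Sum>p\<in>?D. x (snd p) * y (fst p)) + (\<Sum>p\<in>?D. x (snd p) * y (snd p))"
    unfolding arc_form_def by (simp add: algebra_simps sum.distrib sum_subtractf)
  also have "\<dots> = 2 * ((\<Sum>v\<in>V. real (Defs.degree E v) * x v * y v)
      - (\<Sum>v\<in>V. x v * (\<Sum>w\<in>nbrs V E v. y w)))"
    using e1 e2 e3 e4 by simp
  also have "\<dots> = 2 * lap_form V E x y"
    unfolding lap_form_def laplacian_nbrs by (simp add: algebra_simps sum_subtractf)
  finally show ?thesis .
qed

lemma lap_form_sym: "simple_graph V E \<Longrightarrow> lap_form V E x y = lap_form V E y x"
  using arc_form_eq_lap_form[of V E x y] arc_form_eq_lap_form[of V E y x]
  unfolding arc_form_def by (simp add: mult.commute)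

lemma vdot_comm: "vdot V f h = vdot V h f"
  unfolding vdot_def by (simp add: mult.commute)

lemma vdot_nonneg: "vdot V x x \<ge> 0"
  unfolding vdot_def by (simp add: sum_nonneg)

lemma vdot_zero: "finite V \<Longrightarrow> vdot V x x = 0 \<Longrightarrow> v \<in> V \<Longrightarrow> x v = 0"
  unfolding vdot_def using sum_nonneg_eq_0_iff[of V "\<lambda>v. x v * x v"] by auto

lemma vdot_pos: "finite V \<Longrightarrow> \<exists>v\<in>V. f v \<noteq> 0 \<Longrightarrow> vdot V f f > 0"
  using vdot_zero[of V f] vdot_nonneg[of V f] by force

lemma lap_form_line:
  assumes sg: "simple_graph V E"
  shows "lap_form V E (\<lambda>w. x w + t * y w) (\<lambda>w. x w + t * y w)
    = lap_form V E x x + 2 * t * lap_form V E y x + t\<^sup>2 * lap_form V E y y"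
proof -
  let ?D = "Sigma V (nbrs V E)" and ?z = "\<lambda>w. x w + t * y w"
  have "arc_form V E ?z ?z =
     (\<Sum>p\<in>?D. (x (fst p) - x (snd p)) * (x (fst p) - x (snd p))
        + 2 * t * ((y (fst p) - y (snd p)) * (x (fst p) - x (snd p)))
        + t\<^sup>2 * ((y (fst p) - y (snd p)) * (y (fst p) - y (snd p))))"
    unfolding arc_form_def by (rule sum.cong) (auto simp: algebra_simps power2_eq_square)
  also have "\<dots> = arc_form V E x x + 2 * t * arc_form V E y x + t\<^sup>2 * arc_form V E y y"
    unfolding arc_form_def by (simp add: sum.distrib sum_distrib_left)
  finally show ?thesis using arc_form_eq_lap_form[OF sg] by simp
qed

lemma vdot_line:
  "vdot V (\<lambda>w. x w + t * y w) (\<lambda>w. x w + t * y w) = vdot V x x + 2 * t * vdot V y x + t\<^sup>2 * vdot V y y"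
proof -
  have "vdot V (\<lambda>w. x w + t * y w) (\<lambda>w. x w + t * y w)
      = (\<Sum>v\<in>V. x v * x v + 2 * t * (y v * x v) + t\<^sup>2 * (y v * y v))"
    unfolding vdot_def by (rule sum.cong) (auto simp: algebra_simps power2_eq_square)
  then show ?thesis unfolding vdot_def by (simp add: sum.distrib sum_distrib_left)
qed

lemma lap_form_scale: "lap_form V E (\<lambda>w. c * x w) (\<lambda>w. c * x w) = c\<^sup>2 * lap_form V E x x"
  unfolding lap_form_def laplacian_def
  by (simp add: sum_distrib_left algebra_simps power2_eq_square)

lemma vdot_scale: "vdot V (\<lambda>w. a * x w) (\<lambda>w. b * y w) = a * b * vdot V x y"
  unfolding vdot_def by (simp add: sum_distrib_left algebra_simps)

lemma lap_form_local:
  assumes "\<And>v. v \<in> V \<Longrightarrow> x v = y v"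
  shows "lap_form V E x x = lap_form V E y y"
  unfolding lap_form_def laplacian_def using assms by (intro sum.cong) auto

lemma vdot_local: "(\<And>v. v \<in> V \<Longrightarrow> x v = y v) \<Longrightarrow> vdot V x x = vdot V y y"
  unfolding vdot_def by (intro sum.cong) auto

lemma arc_sum_union:
  assumes fV: "finite V" and dj: "F1 \<inter> F2 = {}"
  shows "(\<Sum>p\<in>Sigma V (nbrs V (F1 \<union> F2)). g p)
    = (\<Sum>p\<in>Sigma V (nbrs V F1). g p) + (\<Sum>p\<in>Sigma V (nbrs V F2). g p)"
proof -
  have "Sigma V (nbrs V (F1 \<union> F2)) = Sigma V (nbrs V F1) \<union> Sigma V (nbrs V F2)"
    by (auto simp: nbrs_def)
  moreover have "Sigma V (nbrs V F1) \<inter> Sigma V (nbrs V F2) = {}" using dj by (auto simp: nbrs_def)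
  moreover have "finite (Sigma V (nbrs V F))" for F using fV by (simp add: nbrs_finite)
  ultimately show ?thesis by (simp add: sum.union_disjoint)
qed

lemma arc_sum_two_edges:
  assumes "p \<in> V" "q \<in> V" "r \<in> V" "s \<in> V" and d: "p \<noteq> q" "r \<noteq> s" "{p, q} \<noteq> {r, s}"
  shows "(\<Sum>z\<in>Sigma V (nbrs V {{p, q}, {r, s}}). g z) = g (p, q) + g (q, p) + g (r, s) + g (s, r)"
proof -
  have eq: "Sigma V (nbrs V {{p, q}, {r, s}}) = {(p, q), (q, p), (r, s), (s, r)}"
    using assms by (auto simp: nbrs_def doubleton_eq_iff)
  have "(p, q) \<noteq> (r, s)" "(p, q) \<noteq> (s, r)" "(q, p) \<noteq> (r, s)" "(q, p) \<noteq> (s, r)"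
    using d by (auto simp: doubleton_eq_iff)
  then show ?thesis unfolding eq using d by (simp add: add.assoc)
qed

lemma laplacian_replace_nbr:
  assumes fV: "finite V" and nb: "nbrs V F x = insert b (nbrs V E x - {a})"
    and a: "a \<in> nbrs V E x" and b: "b \<notin> nbrs V E x - {a}"
    and deg: "Defs.degree F x = Defs.degree E x"
  shows "laplacian V F g x = real (Defs.degree E x) * g x - (g b + (\<Sum>w\<in>nbrs V E x - {a}. g w))"
    and "laplacian V E g x = real (Defs.degree E x) * g x - (g a + (\<Sum>w\<in>nbrs V E x - {a}. g w))"
  using b a sum.remove[OF nbrs_finite[OF fV] a, of g] nbrs_finite[OF fV, of E x]
  by (simp_all add: laplacian_nbrs nb deg)

lemma square_opposite_sign:
  fixes a b :: real
  shows "((if a * b > 0 then -1 else 1) * a - b)\<^sup>2 = (\<bar>a\<bar> + \<bar>b\<bar>)\<^sup>2"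
proof -
  have r: "(\<bar>a\<bar> + \<bar>b\<bar>)\<^sup>2 = a\<^sup>2 + b\<^sup>2 + 2 * \<bar>a * b\<bar>"
    by (simp add: power2_eq_square algebra_simps abs_mult)
  show ?thesis
  proof (cases "a * b > 0")
    case True then show ?thesis unfolding r by (simp add: power2_eq_square algebra_simps)
  next
    case False then have "\<bar>a * b\<bar> = - (a * b)" by simp
    then show ?thesis unfolding r using False by (simp add: power2_eq_square algebra_simps)
  qed
qed

lemma square_diff_le: "(a - b)\<^sup>2 \<le> (\<bar>a\<bar> + \<bar>b\<bar>)\<^sup>2" for a b :: real
proof -
  have "\<bar>a - b\<bar> \<le> \<bar>a\<bar> + \<bar>b\<bar>" by (rule abs_triangle_ineq4)
  then show ?thesis by (metis abs_ge_zero abs_le_square_iff abs_of_nonneg add_nonneg_nonneg)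
qed


text \<open>The unit sphere of \<open>\<real>\<^sup>V\<close>, realised inside the function space \<open>'a \<Rightarrow> real\<close> by fixing
  the coordinates outside \<open>V\<close> to be zero, is compact.\<close>
definition unit_sphere :: "'a set \<Rightarrow> ('a \<Rightarrow> real) set" where
  "unit_sphere V = Pi\<^sub>E UNIV (\<lambda>v. if v \<in> V then {-1..1} else {0}) \<inter> {x. vdot V x x = 1}"

lemma coord_continuous: "continuous_on A (\<lambda>x::'a \<Rightarrow> real. x i)"
  by (rule continuous_on_subset[OF continuous_on_product_coordinates]) simp

lemma unit_sphere_compact: "compact (unit_sphere V)"
proof -
  have "compactin (product_topology (\<lambda>_. euclidean) UNIV)
      (Pi\<^sub>E UNIV (\<lambda>v. if v \<in> V then {-1..1::real} else {0}))"
    by (subst compactin_PiE) (auto simp: compactin_euclidean_iff)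
  then have "compact (Pi\<^sub>E UNIV (\<lambda>v. if v \<in> V then {-1..1::real} else {0}))"
    by (simp add: euclidean_product_topology compactin_euclidean_iff)
  moreover have "closed {x::'a \<Rightarrow> real. vdot V x x = 1}"
    unfolding vdot_def by (intro closed_Collect_eq continuous_intros coord_continuous)
  ultimately show ?thesis unfolding unit_sphere_def by (rule compact_Int_closed)
qed

lemma restrict_in_unit_sphere:
  assumes fV: "finite V" and y: "vdot V y y = 1"
  shows "(\<lambda>w. if w \<in> V then y w else 0) \<in> unit_sphere V"
proof -
  have "\<bar>y w\<bar> \<le> 1" if w: "w \<in> V" for w
  proof -
    have "y w * y w \<le> vdot V y y" unfolding vdot_def
      by (rule member_le_sum) (use w fV in simp_all)
    then have "\<bar>y w\<bar>\<^sup>2 \<le> 1\<^sup>2" using y by (simp add: power2_eq_square)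
    then show ?thesis by (rule power2_le_imp_le) simp
  qed
  moreover have "vdot V (\<lambda>w. if w \<in> V then y w else 0) (\<lambda>w. if w \<in> V then y w else 0) = 1"
    using y vdot_local[of V "\<lambda>w. if w \<in> V then y w else 0" y] by simp
  ultimately show ?thesis by (auto simp: unit_sphere_def PiE_UNIV_domain abs_le_iff)
qed

text \<open>By compactness, the Rayleigh quotient \<open>\<langle>x, L x\<rangle> / \<langle>x, x\<rangle>\<close> attains its maximum \<open>M\<close>.\<close>
lemma rayleigh_max:
  assumes sg: "simple_graph V E" and ne: "V \<noteq> {}"
  shows "\<exists>M x0. (\<forall>x. lap_form V E x x \<le> M * vdot V x x) \<and> vdot V x0 x0 = 1 \<and> lap_form V E x0 x0 = M"
proof -
  have fV: "finite V" using sg by (simp add: simple_graph_def)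
  obtain v0 where v0: "v0 \<in> V" using ne by blast
  have "vdot V (\<lambda>w. if w = v0 then 1 else 0) (\<lambda>w. if w = v0 then 1 else 0) = 1"
    using fV v0 unfolding vdot_def by (simp add: if_distrib[of "\<lambda>z. z * _"] cong: if_cong)
  then have "unit_sphere V \<noteq> {}" using restrict_in_unit_sphere[OF fV] by blast
  moreover have "continuous_on (unit_sphere V) (\<lambda>x. lap_form V E x x)"
    unfolding lap_form_def laplacian_def by (intro continuous_intros coord_continuous)
  ultimately obtain x0 where x0: "x0 \<in> unit_sphere V"
    and max: "\<And>y. y \<in> unit_sphere V \<Longrightarrow> lap_form V E y y \<le> lap_form V E x0 x0"
    using continuous_attains_sup[OF unit_sphere_compact] by blast
  define M where "M = lap_form V E x0 x0"
  have "lap_form V E x x \<le> M * vdot V x x" for x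
  proof (cases "vdot V x x = 0")
    case True
    then have "lap_form V E x x = lap_form V E (\<lambda>_. 0) (\<lambda>_. 0)"
      using vdot_zero[OF fV] by (intro lap_form_local) auto
    then show ?thesis using True by (simp add: lap_form_def laplacian_def)
  next
    case False
    define c where "c = sqrt (vdot V x x)"
    have c: "c \<noteq> 0" "c\<^sup>2 = vdot V x x" using False vdot_nonneg[of V x] by (auto simp: c_def)
    define y where "y = (\<lambda>w. x w / c)"
    have x: "x = (\<lambda>w. c * y w)" using c by (simp add: y_def)
    have "vdot V x x = c\<^sup>2 * vdot V y y" unfolding x vdot_scale by (simp add: power2_eq_square)
    then have "c\<^sup>2 * vdot V y y = c\<^sup>2 * 1" using c(2) by linarith
    then have "vdot V y y = 1" using c(1) by simp
    then have "lap_form V E (\<lambda>w. if w \<in> V then y w else 0) (\<lambda>w. if w \<in> V then y w else 0) \<le> M"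
      unfolding M_def by (intro max restrict_in_unit_sphere[OF fV])
    moreover have "lap_form V E (\<lambda>w. if w \<in> V then y w else 0) (\<lambda>w. if w \<in> V then y w else 0)
        = lap_form V E y y"
      by (rule lap_form_local) simp
    ultimately have "lap_form V E y y \<le> M" by simp
    moreover have "lap_form V E x x = c\<^sup>2 * lap_form V E y y" unfolding x by (rule lap_form_scale)
    ultimately show ?thesis
      using c(2) vdot_nonneg[of V x] by (metis mult.commute mult_left_mono)
  qed
  moreover have "vdot V x0 x0 = 1" using x0 by (simp add: unit_sphere_def)
  ultimately show ?thesis unfolding M_def by blast
qed

text \<open>Otherwise moving it a little in the direction of a coordinate vector \<open>\<delta>\<^sub>v\<close> where
  the eigen-equation fails would exceed the bound.\<close>
lemma rayleigh_equality_eigen: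
  assumes sg: "simple_graph V E" and bound: "\<And>z. lap_form V E z z \<le> M * vdot V z z"
    and eq: "lap_form V E x x = M * vdot V x x" and v: "v \<in> V"
  shows "laplacian V E x v = M * x v"
proof (rule ccontr)
  assume ne: "laplacian V E x v \<noteq> M * x v"
  have fV: "finite V" using sg by (simp add: simple_graph_def)
  define y where "y = (\<lambda>w. if w = v then 1 else (0::real))"
  have lyx: "lap_form V E y x = laplacian V E x v"
    using fV v unfolding lap_form_def y_def by (simp add: if_distrib[of "\<lambda>z. z * _"] cong: if_cong)
  have vyx: "vdot V y x = x v"
    using fV v unfolding vdot_def y_def by (simp add: if_distrib[of "\<lambda>z. z * _"] cong: if_cong)
  define q where "q = lap_form V E y y - M * vdot V y y"
  have q: "q \<le> 0" using bound[of y] by (simp add: q_def)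
  define \<beta> where "\<beta> = laplacian V E x v - M * x v"
  define d where "d = 1 - q"
  have d: "d \<noteq> 0" "2 * d + q = 2 - q" using q by (auto simp: d_def)
  define t where "t = \<beta> / d"
  have "lap_form V E (\<lambda>w. x w + t * y w) (\<lambda>w. x w + t * y w)
      \<le> M * vdot V (\<lambda>w. x w + t * y w) (\<lambda>w. x w + t * y w)"
    by (rule bound)
  then have le: "2 * t * \<beta> + t\<^sup>2 * q \<le> 0"
    unfolding lap_form_line[OF sg] vdot_line
    using eq lyx vyx unfolding q_def \<beta>_def by (simp add: algebra_simps)
  have "2 * t * \<beta> + t\<^sup>2 * q = \<beta>\<^sup>2 * (2 * d + q) / d\<^sup>2"
    using d(1) unfolding t_def by (simp add: field_simps power2_eq_square)
  moreover have "\<beta>\<^sup>2 * (2 * d + q) / d\<^sup>2 > 0"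
    using ne q d unfolding \<beta>_def by (intro divide_pos_pos mult_pos_pos) auto
  ultimately show False using le by simp
qed

lemma eigenvector_lap_form: "lap_eigenvector V E \<nu> h \<Longrightarrow> lap_form V E f h = \<nu> * vdot V f h"
  unfolding lap_eigenvector_def lap_form_def vdot_def by (simp add: sum_distrib_left algebra_simps)

text \<open>Eigenvectors for different eigenvalues are orthogonal (symmetry of \<open>L\<close>).\<close>
lemma eigenvectors_orthogonal:
  assumes sg: "simple_graph V E" and f: "lap_eigenvector V E \<mu> f" and h: "lap_eigenvector V E \<nu> h"
    and ne: "\<mu> \<noteq> \<nu>"
  shows "vdot V f h = 0"
proof -
  have "\<nu> * vdot V f h = lap_form V E f h" by (rule eigenvector_lap_form[OF h, symmetric])
  also have "\<dots> = lap_form V E h f" by (rule lap_form_sym[OF sg])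
  also have "\<dots> = \<mu> * vdot V f h" using eigenvector_lap_form[OF f, of h] vdot_comm[of V h f] by simp
  finally show ?thesis using ne by simp
qed

text \<open>An orthonormal family in \<open>\<real>\<^sup>V\<close> has at most \<open>|V|\<close> members: by Bessel's inequality
  for the coordinate vectors, \<open>\<Sum>\<^sub>i g\<^sub>i(v)\<^sup>2 \<le> 1\<close> for every \<open>v\<close>, and summing over \<open>v\<close> gives
  \<open>|I| \<le> |V|\<close>.\<close>
lemma orthonormal_pointwise:
  fixes g :: "'i \<Rightarrow> 'a \<Rightarrow> real"
  assumes fV: "finite V" and fI: "finite I" and v: "v \<in> V"
    and ortho: "\<And>i j. i \<in> I \<Longrightarrow> j \<in> I \<Longrightarrow> vdot V (g i) (g j) = (if i = j then 1 else 0)"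
  shows "(\<Sum>i\<in>I. (g i v)\<^sup>2) \<le> 1"
proof -
  define e where "e = (\<lambda>w. if w = v then 1 else (0::real))"
  define s where "s w = (\<Sum>i\<in>I. g i v * g i w)" for w
  have pick: "(\<Sum>w\<in>V. e w * h w) = h v" for h :: "'a \<Rightarrow> real"
  proof -
    have "(\<Sum>w\<in>V. e w * h w) = (\<Sum>w\<in>V. if w = v then h v else 0)"
      unfolding e_def by (rule sum.cong) auto
    then show ?thesis using fV v by simp
  qed
  have ss: "(\<Sum>w\<in>V. s w * s w) = (\<Sum>i\<in>I. (g i v)\<^sup>2)"
  proof -
    have "(\<Sum>w\<in>V. s w * s w) = (\<Sum>i\<in>I. \<Sum>j\<in>I. g i v * g j v * vdot V (g i) (g j))"
      unfolding s_def vdot_def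
      by (simp add: sum_product sum_distrib_left sum.swap[of _ V] algebra_simps)
    also have "\<dots> = (\<Sum>i\<in>I. \<Sum>j\<in>I. if j = i then g i v * g i v else 0)"
      by (intro sum.cong refl) (simp add: ortho)
    finally show ?thesis using fI by (simp add: power2_eq_square)
  qed
  have "0 \<le> (\<Sum>w\<in>V. (e w - s w)\<^sup>2)" by (simp add: sum_nonneg)
  also have "\<dots> = (\<Sum>w\<in>V. e w * e w) - 2 * (\<Sum>w\<in>V. e w * s w) + (\<Sum>w\<in>V. s w * s w)"
    by (simp add: power2_eq_square algebra_simps sum.distrib sum_subtractf sum_distrib_left)
  also have "\<dots> = 1 - (\<Sum>i\<in>I. (g i v)\<^sup>2)"
    unfolding pick ss by (simp add: e_def s_def power2_eq_square)
  finally show ?thesis by simp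
qed

lemma orthonormal_card_le:
  fixes g :: "'i \<Rightarrow> 'a \<Rightarrow> real"
  assumes fV: "finite V" and fI: "finite I"
    and ortho: "\<And>i j. i \<in> I \<Longrightarrow> j \<in> I \<Longrightarrow> vdot V (g i) (g j) = (if i = j then 1 else 0)"
  shows "card I \<le> card V"
proof -
  have "real (card I) = (\<Sum>i\<in>I. vdot V (g i) (g i))" using ortho by simp
  also have "\<dots> = (\<Sum>v\<in>V. \<Sum>i\<in>I. (g i v)\<^sup>2)"
    unfolding vdot_def by (simp add: sum.swap[of _ I] power2_eq_square)
  also have "\<dots> \<le> (\<Sum>v\<in>V. 1)" by (intro sum_mono orthonormal_pointwise[OF fV fI _ ortho])
  finally show ?thesis by simp
qed

lemma eigenvalues_finite:
  assumes sg: "simple_graph V E"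
  shows "finite {\<mu>. lap_eigenvalue V E \<mu>}"
proof (rule ccontr)
  assume inf: "infinite {\<mu>. lap_eigenvalue V E \<mu>}"
  have fV: "finite V" using sg by (simp add: simple_graph_def)
  obtain I where I: "finite I" "card I = card V + 1" "I \<subseteq> {\<mu>. lap_eigenvalue V E \<mu>}"
    using infinite_arbitrarily_large[OF inf] by blast
  define f where "f \<mu> = (SOME f. lap_eigenvector V E \<mu> f)" for \<mu>
  have f: "lap_eigenvector V E \<mu> (f \<mu>)" if "\<mu> \<in> I" for \<mu>
    using I(3) that someI_ex[of "lap_eigenvector V E \<mu>"] unfolding f_def lap_eigenvalue_def by blast
  define g where "g \<mu> = (\<lambda>w. inverse (sqrt (vdot V (f \<mu>) (f \<mu>))) * f \<mu> w)" for \<mu>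
  have "vdot V (g \<mu>) (g \<nu>) = (if \<mu> = \<nu> then 1 else 0)" if "\<mu> \<in> I" "\<nu> \<in> I" for \<mu> \<nu>
  proof -
    have pos: "vdot V (f \<mu>) (f \<mu>) > 0" using vdot_pos[OF fV] f[OF that(1)]
      unfolding lap_eigenvector_def by blast
    have "vdot V (g \<mu>) (g \<nu>) = inverse (sqrt (vdot V (f \<mu>) (f \<mu>)) * sqrt (vdot V (f \<nu>) (f \<nu>)))
        * vdot V (f \<mu>) (f \<nu>)"
      unfolding g_def by (simp add: vdot_scale)
    then show ?thesis
      using pos eigenvectors_orthogonal[OF sg f[OF that(1)] f[OF that(2)]]
      by (cases "\<mu> = \<nu>") (simp_all add: real_sqrt_mult_self)
  qed
  then have "card I \<le> card V" by (rule orthonormal_card_le[OF fV I(1)])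
  then show False using I(2) by simp
qed

lemma lap_max_eig_rayleigh:
  assumes sg: "simple_graph V E" and ne: "V \<noteq> {}"
  shows "lap_form V E x x \<le> lap_max_eig V E * vdot V x x"
    and "lap_form V E x x = lap_max_eig V E * vdot V x x \<Longrightarrow> v \<in> V
          \<Longrightarrow> laplacian V E x v = lap_max_eig V E * x v"
proof -
  have fV: "finite V" using sg by (simp add: simple_graph_def)
  obtain M x0 where M: "\<And>x. lap_form V E x x \<le> M * vdot V x x" "vdot V x0 x0 = 1"
      "lap_form V E x0 x0 = M"
    using rayleigh_max[OF sg ne] by blast
  have "\<exists>v\<in>V. x0 v \<noteq> 0"
  proof (rule ccontr)
    assume "\<not> (\<exists>v\<in>V. x0 v \<noteq> 0)"
    then have "vdot V x0 x0 = 0" unfolding vdot_def by simp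
    then show False using M(2) by simp
  qed
  moreover have "\<forall>v\<in>V. laplacian V E x0 v = M * x0 v"
    using rayleigh_equality_eigen[OF sg M(1)] M(2,3) by simp
  ultimately have Meig: "lap_eigenvalue V E M"
    unfolding lap_eigenvalue_def lap_eigenvector_def by blast
  have Mmax: "\<mu> \<le> M" if eig: "lap_eigenvalue V E \<mu>" for \<mu>
  proof -
    obtain f where f: "lap_eigenvector V E \<mu> f" using eig unfolding lap_eigenvalue_def by blast
    have "vdot V f f > 0" using vdot_pos[OF fV] f unfolding lap_eigenvector_def by blast
    moreover have "\<mu> * vdot V f f \<le> M * vdot V f f" using eigenvector_lap_form[OF f] M(1)[of f] by simp
    ultimately show ?thesis by simp
  qed
  have "lap_max_eig V E = M" unfolding lap_max_eig_def
    by (rule Max_eqI[OF eigenvalues_finite[OF sg]]) (use Mmax Meig in auto)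
  then show "lap_form V E x x \<le> lap_max_eig V E * vdot V x x"
    and "lap_form V E x x = lap_max_eig V E * vdot V x x \<Longrightarrow> v \<in> V
          \<Longrightarrow> laplacian V E x v = lap_max_eig V E * x v"
    using M(1) rayleigh_equality_eigen[OF sg M(1)] by simp_all
qed

locale edge_swap =
  fixes V :: "'a set" and E :: "'a set set" and u1 v1 u2 v2 :: 'a
  assumes tree: "is_tree V E"
    and e1: "{u1, v1} \<in> E" and e2: "{u2, v2} \<in> E"
    and distinct_v: "v1 \<noteq> v2"
    and avoid1: "u1 \<notin> set (tree_path V E v1 v2)" and avoid2: "u2 \<notin> set (tree_path V E v1 v2)"
begin

abbreviation "E0 \<equiv> E - {{u1, v1}, {u2, v2}}"
abbreviation "Esw \<equiv> (E - {{u1, v1}, {u2, v2}}) \<union> {{u1, v2}, {u2, v1}}"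

lemma sg: "simple_graph V E" and ac: "acyclic_graph V E" and cn: "connected_graph V E"
  using tree unfolding is_tree_def by auto

lemma fV: "finite V" using sg unfolding simple_graph_def by blast

lemma inV: "u1 \<in> V" "v1 \<in> V" "u2 \<in> V" "v2 \<in> V" "u1 \<noteq> v1" "u2 \<noteq> v2"
  using simple_edge[OF sg e1] simple_edge[OF sg e2] by auto

abbreviation "P \<equiv> tree_path V E v1 v2"

lemma path_props: "is_path E P" "hd P = v1" "last P = v2"
  using tree_path_props[OF tree inV(2) inV(4)] by auto

lemma u_not_v: "u1 \<noteq> v2" "u2 \<noteq> v1"
proof -
  have "P \<noteq> []" using path_props(1) walk_nonempty by (auto simp: is_path_def)
  then have "v1 \<in> set P" "v2 \<in> set P" using path_props by (metis hd_in_set, metis last_in_set)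
  then show "u1 \<noteq> v2" "u2 \<noteq> v1" using avoid1 avoid2 by auto
qed

lemma edges_ne: "{u1, v1} \<noteq> {u2, v2}"
  using u_not_v distinct_v by (auto simp: doubleton_eq_iff)

text \<open>The path \<open>P\<close> survives in the forest \<open>E0\<close>, since it avoids \<open>u\<^sub>1\<close> and \<open>u\<^sub>2\<close>.\<close>
lemma path_in_forest: "reach E0 v1 v2"
proof -
  have w: "is_walk E P" using path_props by (simp add: is_path_def)
  have "is_walk (E - {{u1, v1}} - {{u2, v2}}) P"
    using walk_avoid[OF walk_avoid[OF w avoid1] avoid2] by simp
  moreover have "E - {{u1, v1}} - {{u2, v2}} = E0" by auto
  ultimately show ?thesis using walk_reach path_props by metis
qed

text \<open>The forest \<open>E0\<close> has three components: that of \<open>u\<^sub>1\<close>, that of \<open>u\<^sub>2\<close>, and the one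
  containing \<open>P\<close>. These separation facts all follow from the removed edges being bridges.\<close>
lemma sep_u1_v1: "\<not> reach E0 u1 v1"
  using bridge_of_acyclic[OF sg ac e1] reach_mono[of E0 "E - {{u1, v1}}"] by blast

lemma sep_u2_v2: "\<not> reach E0 u2 v2"
  using bridge_of_acyclic[OF sg ac e2] reach_mono[of E0 "E - {{u2, v2}}"] by blast

lemma sep_u1_v2: "\<not> reach E0 u1 v2"
  using sep_u1_v1 reach_sym[OF path_in_forest] rtranclp_trans[of "adj E0" u1 v2 v1] by blast

lemma sep_u2_v1: "\<not> reach E0 u2 v1"
  using sep_u2_v2 path_in_forest rtranclp_trans[of "adj E0" u2 v1 v2] by blast

lemma sep_u1_u2: "\<not> reach E0 u1 u2"
proof
  assume "reach E0 u1 u2"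
  let ?F = "E - {{u1, v1}}"
  have sub: "E0 \<subseteq> ?F" by blast
  have "reach ?F u1 u2" using \<open>reach E0 u1 u2\<close> by (rule reach_mono[OF sub])
  also have "reach ?F u2 v2" using e2 edges_ne by (intro reach_edge) blast
  also have "reach ?F v2 v1" using reach_sym[OF path_in_forest] by (rule reach_mono[OF sub])
  finally show False using bridge_of_acyclic[OF sg ac e1] by simp
qed

lemma u_neq: "u1 \<noteq> u2" using sep_u1_u2 by auto

lemma new_edges_fresh: "{u1, v2} \<notin> E" "{u2, v1} \<notin> E"
proof -
  have "{u1, v2} \<notin> {{u1, v1}, {u2, v2}}" "{u2, v1} \<notin> {{u1, v1}, {u2, v2}}"
    using distinct_v u_neq u_not_v by (auto simp: doubleton_eq_iff)
  then show "{u1, v2} \<notin> E" "{u2, v1} \<notin> E"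
    using reach_edge[of u1 v2 E0] reach_edge[of u2 v1 E0] sep_u1_v2 sep_u2_v1 by blast+
qed

lemma swap_simple: "simple_graph V Esw"
  unfolding simple_graph_def
proof (intro conjI ballI)
  fix e assume "e \<in> Esw"
  then consider "e \<in> E" | "e = {u1, v2}" | "e = {u2, v1}" by blast
  then show "\<exists>u v. e = {u, v} \<and> u \<noteq> v \<and> u \<in> V \<and> v \<in> V"
    using sg inV u_not_v unfolding simple_graph_def by cases blast+
qed (rule fV)

text \<open>Each removed edge is bridged in \<open>T'\<close> through a new edge and \<open>P\<close>, so \<open>T'\<close> is connected.\<close>
lemma swap_connected: "connected_graph V Esw"
proof -
  have P': "reach Esw v1 v2" using path_in_forest by (rule reach_mono[rotated]) blast
  have n1: "reach Esw u1 v2" and n2: "reach Esw u2 v1" by (auto intro: reach_edge)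
  have "reach Esw a b" if ab: "{a, b} \<in> E" for a b
  proof -
    have old1: "reach Esw u1 v1" using n1 reach_sym[OF P'] by (rule rtranclp_trans)
    have old2: "reach Esw u2 v2" using n2 P' by (rule rtranclp_trans)
    consider "{a, b} \<in> E0" | "{a, b} = {u1, v1}" | "{a, b} = {u2, v2}" using ab by blast
    then show ?thesis
    proof cases
      case 1 then show ?thesis by (intro reach_edge) blast
    next
      case 2 then show ?thesis using old1 reach_sym[OF old1] by (auto simp: doubleton_eq_iff)
    next
      case 3 then show ?thesis using old2 reach_sym[OF old2] by (auto simp: doubleton_eq_iff)
    qed
  qed
  then show ?thesis
    using cn reach_via[of E Esw] connected_graph_iff_reach[OF sg] connected_graph_iff_reach[OF swap_simple]
    by blast
qed

text \<open>\<open>T'\<close> arises from the three-component forest \<open>E0\<close> by joining the component of \<open>u\<^sub>1\<close>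
  to that of \<open>P\<close>, and then the component of \<open>u\<^sub>2\<close> to the result, so it is acyclic.\<close>
lemma swap_acyclic: "acyclic_graph V Esw"
proof -
  let ?G = "E0 \<union> {{u1, v2}}"
  have simple: "simple_graph V E0" "simple_graph V ?G"
    by (rule simple_graph_subset[OF swap_simple], blast)+
  have "acyclic_graph V E0" by (rule acyclic_mono[OF ac]) blast
  then have "acyclic_graph V ?G" by (rule acyclic_add_edge[OF simple(1) _ sep_u1_v2])
  moreover have "\<not> reach ?G u2 v1"
  proof
    assume "reach ?G u2 v1"
    from reach_add_edge[OF this] show False
      using sep_u2_v1 sep_u2_v2 reach_sym[of E0 u2 u1] sep_u1_u2 by blast
  qed
  ultimately have "acyclic_graph V (?G \<union> {{u2, v1}})" by (rule acyclic_add_edge[OF simple(2)])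
  moreover have "?G \<union> {{u2, v1}} = Esw" by blast
  ultimately show ?thesis by simp
qed

lemma swap_tree: "is_tree V Esw"
  using swap_simple swap_connected swap_acyclic tree unfolding is_tree_def by blast

text \<open>Every vertex loses exactly as many of the old edges as it gains new ones.\<close>
lemma swap_degree: "Defs.degree Esw v = Defs.degree E v"
proof -
  let ?at = "\<lambda>F. {e \<in> F. v \<in> e}"
  have f0: "finite (?at E0)" using simple_finite[OF sg] by simp
  have "?at Esw = ?at E0 \<union> ?at {{u1, v2}, {u2, v1}}" by blast
  moreover have "?at E0 \<inter> ?at {{u1, v2}, {u2, v1}} = {}" using new_edges_fresh by blast
  ultimately have new: "card (?at Esw) = card (?at E0) + card (?at {{u1, v2}, {u2, v1}})"
    using f0 by (simp add: card_Un_disjoint)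
  have "?at E = ?at E0 \<union> ?at {{u1, v1}, {u2, v2}}" using e1 e2 by blast
  moreover have "?at E0 \<inter> ?at {{u1, v1}, {u2, v2}} = {}" by blast
  ultimately have old: "card (?at E) = card (?at E0) + card (?at {{u1, v1}, {u2, v2}})"
    using f0 by (simp add: card_Un_disjoint)
  have new_ne: "{u1, v2} \<noteq> {u2, v1}" using u_neq inV by (auto simp: doubleton_eq_iff)
  have "card (?at {{u1, v2}, {u2, v1}}) = card (?at {{u1, v1}, {u2, v2}})"
    unfolding card_edges_at[OF edges_ne] card_edges_at[OF new_ne]
    using inV u_not_v u_neq distinct_v by auto
  then show ?thesis unfolding Defs.degree_def using new old by simp
qed

lemma swap_degree_seq: "degree_seq V Esw = degree_seq V E"
proof -
  have "Defs.degree Esw = Defs.degree E" by (rule ext) (rule swap_degree)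
  then show ?thesis unfolding degree_seq_def by simp
qed

text \<open>The test vector for \<open>T'\<close>: starting from \<open>f\<close>, flip the sign on the component of \<open>u\<^sub>1\<close>
  (resp. \<open>u\<^sub>2\<close>) in the forest \<open>E0\<close> if needed, so that the values at the two ends of each new
  edge do not have the same strict sign.\<close>
definition flip1 :: "('a \<Rightarrow> real) \<Rightarrow> real" where
  "flip1 f = (if f u1 * f v2 > 0 then -1 else 1)"

definition flip2 :: "('a \<Rightarrow> real) \<Rightarrow> real" where
  "flip2 f = (if f u2 * f v1 > 0 then -1 else 1)"

definition twist :: "('a \<Rightarrow> real) \<Rightarrow> 'a \<Rightarrow> real" where
  "twist f w = (if reach E0 u1 w then flip1 f * f w
     else if reach E0 u2 w then flip2 f * f w else f w)"

lemma flip_abs: "\<bar>flip1 f\<bar> = 1" "\<bar>flip2 f\<bar> = 1"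
  by (simp_all add: flip1_def flip2_def)

lemma flip_square: "flip1 f * flip1 f = 1" "flip2 f * flip2 f = 1"
  by (simp_all add: flip1_def flip2_def)

lemma twist_ends: "twist f u1 = flip1 f * f u1" "twist f v2 = f v2"
    "twist f u2 = flip2 f * f u2" "twist f v1 = f v1"
  using sep_u1_v1 sep_u1_v2 sep_u2_v2 sep_u2_v1 sep_u1_u2 by (auto simp: twist_def)

lemma twist_abs: "\<bar>twist f w\<bar> = \<bar>f w\<bar>"
  by (simp add: twist_def abs_mult flip_abs)

text \<open>Along the edges of \<open>E0\<close> the twist flips both ends or neither.\<close>
lemma twist_forest_edge:
  assumes "{a, b} \<in> E0"
  shows "(twist f a - twist f b)\<^sup>2 = (f a - f b)\<^sup>2"
proof -
  have r: "reach E0 a b" "reach E0 b a" using assms by (simp_all add: reach_edge insert_commute)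
  have "reach E0 c a \<longleftrightarrow> reach E0 c b" for c
    using rtranclp_trans[OF _ r(1), of c] rtranclp_trans[OF _ r(2), of c] by blast
  moreover have "(\<sigma> * f a - \<sigma> * f b)\<^sup>2 = (f a - f b)\<^sup>2" if "\<sigma> * \<sigma> = 1" for \<sigma>
  proof -
    have "(\<sigma> * f a - \<sigma> * f b)\<^sup>2 = (\<sigma> * \<sigma>) * (f a - f b)\<^sup>2"
      by (simp add: power2_eq_square algebra_simps)
    then show ?thesis using that by simp
  qed
  ultimately show ?thesis unfolding twist_def using flip_square[of f] by auto
qed

text \<open>Only the four arcs of the switched edges change, hence the change of the arc form.\<close>
lemma arc_form_swap:
  "arc_form V Esw (twist f) (twist f) - arc_form V E f f =
   2 * ((flip1 f * f u1 - f v2)\<^sup>2 + (flip2 f * f u2 - f v1)\<^sup>2 - (f u1 - f v1)\<^sup>2 - (f u2 - f v2)\<^sup>2)"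
proof -
  let ?g = "\<lambda>x p. (x (fst p) - x (snd p)) * (x (fst p) - x (snd p))"
  have new: "arc_form V Esw (twist f) (twist f) = (\<Sum>p\<in>Sigma V (nbrs V E0). ?g (twist f) p)
      + (\<Sum>p\<in>Sigma V (nbrs V {{u1, v2}, {u2, v1}}). ?g (twist f) p)"
    unfolding arc_form_def using new_edges_fresh by (intro arc_sum_union[OF fV]) blast
  have old: "arc_form V E f f = (\<Sum>p\<in>Sigma V (nbrs V E0). ?g f p)
      + (\<Sum>p\<in>Sigma V (nbrs V {{u1, v1}, {u2, v2}}). ?g f p)"
  proof -
    have split: "E = E0 \<union> {{u1, v1}, {u2, v2}}" using e1 e2 by blast
    show ?thesis unfolding arc_form_def by (subst split, rule arc_sum_union[OF fV]) blast
  qed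
  have same: "(\<Sum>p\<in>Sigma V (nbrs V E0). ?g (twist f) p) = (\<Sum>p\<in>Sigma V (nbrs V E0). ?g f p)"
  proof (rule sum.cong[OF refl])
    fix p assume "p \<in> Sigma V (nbrs V E0)"
    then have "{fst p, snd p} \<in> E0" by (auto simp: nbrs_def)
    then show "?g (twist f) p = ?g f p"
      using twist_forest_edge[of "fst p" "snd p" f] by (simp add: power2_eq_square)
  qed
  have "{u1, v2} \<noteq> {u2, v1}" using u_neq inV by (auto simp: doubleton_eq_iff)
  then have "(\<Sum>p\<in>Sigma V (nbrs V {{u1, v2}, {u2, v1}}). ?g (twist f) p) =
      2 * ((flip1 f * f u1 - f v2)\<^sup>2 + (flip2 f * f u2 - f v1)\<^sup>2)"
    using arc_sum_two_edges[of u1 V v2 u2 v1 "?g (twist f)"] inV u_not_v twist_ends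
    by (simp add: power2_eq_square algebra_simps)
  moreover have "(\<Sum>p\<in>Sigma V (nbrs V {{u1, v1}, {u2, v2}}). ?g f p) =
      2 * ((f u1 - f v1)\<^sup>2 + (f u2 - f v2)\<^sup>2)"
    using arc_sum_two_edges[of u1 V v1 u2 v2 "?g f"] inV edges_ne
    by (simp add: power2_eq_square algebra_simps)
  ultimately show ?thesis using new old same by simp
qed

text \<open>The key estimate: under the hypotheses of the theorem the twisted vector does at least
  as well on \<open>T'\<close> as \<open>f\<close> does on \<open>T\<close>, because
  \<open>(|a\<^sub>1| + |b\<^sub>2|)\<^sup>2 + (|a\<^sub>2| + |b\<^sub>1|)\<^sup>2 - (|a\<^sub>1| + |b\<^sub>1|)\<^sup>2 - (|a\<^sub>2| + |b\<^sub>2|)\<^sup>2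
    = 2 (|a\<^sub>1| - |a\<^sub>2|)(|b\<^sub>2| - |b\<^sub>1|)\<close>.\<close>
lemma arc_form_swap_ge:
  assumes "\<bar>f u2\<bar> \<le> \<bar>f u1\<bar>" and "\<bar>f v1\<bar> \<le> \<bar>f v2\<bar>"
  shows "arc_form V E f f \<le> arc_form V Esw (twist f) (twist f)"
proof -
  have "(f u1 - f v1)\<^sup>2 + (f u2 - f v2)\<^sup>2 \<le> (\<bar>f u1\<bar> + \<bar>f v1\<bar>)\<^sup>2 + (\<bar>f u2\<bar> + \<bar>f v2\<bar>)\<^sup>2"
    by (intro add_mono square_diff_le)
  also have "\<dots> = (\<bar>f u1\<bar> + \<bar>f v2\<bar>)\<^sup>2 + (\<bar>f u2\<bar> + \<bar>f v1\<bar>)\<^sup>2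
      - 2 * ((\<bar>f u1\<bar> - \<bar>f u2\<bar>) * (\<bar>f v2\<bar> - \<bar>f v1\<bar>))"
    by (simp add: power2_eq_square algebra_simps)
  also have "\<dots> \<le> (\<bar>f u1\<bar> + \<bar>f v2\<bar>)\<^sup>2 + (\<bar>f u2\<bar> + \<bar>f v1\<bar>)\<^sup>2"
    using assms by simp
  also have "\<dots> = (flip1 f * f u1 - f v2)\<^sup>2 + (flip2 f * f u2 - f v1)\<^sup>2"
    unfolding flip1_def flip2_def square_opposite_sign ..
  finally show ?thesis using arc_form_swap[of f] by simp
qed

text \<open>If the twisted vector is an eigenvector of \<open>T'\<close> for the same eigenvalue as \<open>f\<close> on \<open>T\<close>,
  comparing the eigen-equations at \<open>u\<^sub>1\<close> and at \<open>v\<^sub>1\<close> forces equality in both hypotheses.\<close>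
lemma eigen_equation_u1:
  assumes "laplacian V E f u1 = \<mu> * f u1" and "laplacian V Esw (twist f) u1 = \<mu> * twist f u1"
  shows "\<bar>f v2\<bar> = \<bar>f v1\<bar>"
proof -
  let ?N = "nbrs V E u1 - {v1}"
  have nb: "nbrs V Esw u1 = insert v2 ?N"
    using inV u_not_v u_neq distinct_v by (auto simp: nbrs_def doubleton_eq_iff)
  have v1: "v1 \<in> nbrs V E u1" using e1 inV by (simp add: nbrs_def)
  have v2: "v2 \<notin> ?N" using new_edges_fresh by (simp add: nbrs_def)
  have twN: "(\<Sum>w\<in>?N. twist f w) = flip1 f * (\<Sum>w\<in>?N. f w)"
  proof -
    have "reach E0 u1 w" if "w \<in> ?N" for w
      using that inV u_neq u_not_v by (intro reach_edge) (auto simp: nbrs_def doubleton_eq_iff)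
    then show ?thesis by (simp add: twist_def sum_distrib_left)
  qed
  note lap = laplacian_replace_nbr[OF fV nb v1 v2 swap_degree]
  define d where "d = real (Defs.degree E u1)"
  define s where "s = (\<Sum>w\<in>?N. f w)"
  define \<sigma> where "\<sigma> = flip1 f"
  have old: "d * f u1 - (f v1 + s) = \<mu> * f u1"
    using assms(1) lap(2)[of f] unfolding d_def s_def by simp
  have new: "d * (\<sigma> * f u1) - (f v2 + \<sigma> * s) = \<mu> * (\<sigma> * f u1)"
    using assms(2) lap(1)[of "twist f"] twN twist_ends unfolding d_def s_def \<sigma>_def by simp
  have "\<sigma> * (d * f u1 - (f v1 + s)) = \<sigma> * (\<mu> * f u1)" using old by simp
  then have "f v2 = \<sigma> * f v1" using new by (simp add: algebra_simps)
  then show ?thesis using flip_abs[of f] by (simp add: abs_mult \<sigma>_def)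
qed

lemma eigen_equation_v1:
  assumes "laplacian V E f v1 = \<mu> * f v1" and "laplacian V Esw (twist f) v1 = \<mu> * twist f v1"
  shows "\<bar>f u2\<bar> = \<bar>f u1\<bar>"
proof -
  let ?N = "nbrs V E v1 - {u1}"
  have nb: "nbrs V Esw v1 = insert u2 ?N"
    using inV u_not_v u_neq distinct_v by (auto simp: nbrs_def doubleton_eq_iff insert_commute)
  have u1: "u1 \<in> nbrs V E v1" using e1 inV by (simp add: nbrs_def insert_commute)
  have u2: "u2 \<notin> ?N" using new_edges_fresh by (simp add: nbrs_def insert_commute)
  have twN: "(\<Sum>w\<in>?N. twist f w) = (\<Sum>w\<in>?N. f w)"
  proof (rule sum.cong[OF refl])
    fix w assume "w \<in> ?N"
    then have "reach E0 v1 w" using inV u_not_v distinct_v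
      by (intro reach_edge) (auto simp: nbrs_def doubleton_eq_iff)
    then have "\<not> reach E0 u1 w" "\<not> reach E0 u2 w"
      using sep_u1_v1 sep_u2_v1 reach_sym rtranclp_trans[of "adj E0"] by metis+
    then show "twist f w = f w" by (simp add: twist_def)
  qed
  note lap = laplacian_replace_nbr[OF fV nb u1 u2 swap_degree]
  have "f u1 = flip2 f * f u2"
    using assms lap(2)[of f] lap(1)[of "twist f"] twN twist_ends by simp
  then show ?thesis using flip_abs[of f] by (simp add: abs_mult)
qed

lemma vdot_twist: "vdot V (twist f) (twist f) = vdot V f f"
  unfolding vdot_def using twist_abs[of f] by (metis abs_mult_self_eq)

lemma swap_lap_max_eig:
  assumes f: "lap_eigenvector V E (lap_max_eig V E) f"
    and h: "\<bar>f u2\<bar> \<le> \<bar>f u1\<bar>" "\<bar>f v1\<bar> \<le> \<bar>f v2\<bar>"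
  shows "lap_max_eig V E \<le> lap_max_eig V Esw"
    and "\<bar>f u1\<bar> > \<bar>f u2\<bar> \<or> \<bar>f v2\<bar> > \<bar>f v1\<bar> \<Longrightarrow> lap_max_eig V E < lap_max_eig V Esw"
proof -
  let ?l = "lap_max_eig V E" and ?l' = "lap_max_eig V Esw" and ?x = "twist f"
  have ne: "V \<noteq> {}" using inV by blast
  have pos: "vdot V f f > 0" using vdot_pos[OF fV] f unfolding lap_eigenvector_def by blast
  have "?l * vdot V f f = lap_form V E f f" by (rule eigenvector_lap_form[OF f, symmetric])
  also have ge: "\<dots> \<le> lap_form V Esw ?x ?x"
    using arc_form_swap_ge[OF h] arc_form_eq_lap_form[OF sg] arc_form_eq_lap_form[OF swap_simple]
    by simp
  also have le: "\<dots> \<le> ?l' * vdot V f f"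
    using lap_max_eig_rayleigh(1)[OF swap_simple ne, of ?x] vdot_twist by simp
  finally have chain: "?l * vdot V f f \<le> ?l' * vdot V f f" .
  then show "?l \<le> ?l'" using pos by simp
  assume strict: "\<bar>f u1\<bar> > \<bar>f u2\<bar> \<or> \<bar>f v2\<bar> > \<bar>f v1\<bar>"
  show "?l < ?l'"
  proof (rule ccontr)
    assume "\<not> ?l < ?l'"
    then have eq: "?l' = ?l" using chain pos by simp
    then have "lap_form V Esw ?x ?x = ?l' * vdot V ?x ?x"
      using ge le eigenvector_lap_form[OF f, of f] vdot_twist[of f] by simp
    then have x: "laplacian V Esw ?x v = ?l * ?x v" if "v \<in> V" for v
      using lap_max_eig_rayleigh(2)[OF swap_simple ne] that eq by simp
    have f': "laplacian V E f v = ?l * f v" if "v \<in> V" for v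
      using f that unfolding lap_eigenvector_def by blast
    have "\<bar>f v2\<bar> = \<bar>f v1\<bar>" using eigen_equation_u1[OF f' x] inV by simp
    moreover have "\<bar>f u2\<bar> = \<bar>f u1\<bar>" using eigen_equation_v1[OF f' x] inV by simp
    ultimately show False using strict by simp
  qed
qed

end

theorem lemma5:
  fixes V :: "'a set" and E :: "'a set set" and u1 v1 u2 v2 :: 'a
  assumes tree: "is_tree V E"
    and e1: "{u1, v1} \<in> E" and e2: "{u2, v2} \<in> E"
    and distinct_v: "v1 \<noteq> v2"
    and path_avoid: "u1 \<notin> set (tree_path V E v1 v2)" "u2 \<notin> set (tree_path V E v1 v2)"
  defines "E' \<equiv> (E - {{u1, v1}, {u2, v2}}) \<union> {{u1, v2}, {u2, v1}}"
  shows "is_tree V E' \<and> degree_seq V E' = degree_seq V E \<and>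
    (\<forall>f. lap_eigenvector V E (lap_max_eig V E) f \<longrightarrow>
       \<bar>f u1\<bar> \<ge> \<bar>f u2\<bar> \<longrightarrow> \<bar>f v2\<bar> \<ge> \<bar>f v1\<bar> \<longrightarrow>
         lap_max_eig V E' \<ge> lap_max_eig V E \<and>
         ((\<bar>f u1\<bar> > \<bar>f u2\<bar> \<or> \<bar>f v2\<bar> > \<bar>f v1\<bar>) \<longrightarrow> lap_max_eig V E' > lap_max_eig V E))"
proof -
  interpret edge_swap V E u1 v1 u2 v2
    using tree e1 e2 distinct_v path_avoid by unfold_locales
  show ?thesis
    unfolding E'_def using swap_tree swap_degree_seq swap_lap_max_eig by blast
qed

end
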